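(* For all $k \ge 2$ and $n \ge 6$, \[ w(n,k) = w(n-1,k-1) + w(n-2,k), \] where $w(m,j)$ is the number of compositions of $m$ with all parts in $\{1,2\}$ having exactly $j$ water cells.
   Context: A composition of $n \ge 0$ is a finite sequence $(c_1,\dots,c_t)$ of positive integers with $c_1+\cdots+c_t=n$; the empty composition is the unique composition of $0$. Let $C_{12}(n)$ be the set of compositions of $n$ all of whose parts lie in $\{1,2\}$. The number of water cells of a composition $(c_1,\dots,c_t)$ is $\sum_{i=1}^{t} \max\bigl(0, \min(\max_{j \le i} c_j, \max_{j \ge i} c_j) - c_i\bigr)$ (the number of unit squares that would hold water poured over its bargraph, in which column $i$ has height $c_i$). For $n,k \ge 0$, $W(n,k)$ is the set of compositions in $C_{12}(n)$ with exactly $k$ water cells and $w(n,k)=|W(n,k)|$. *)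

theory Defs
  imports Main
begin

definition C12 :: "nat \<Rightarrow> nat list set" where
  "C12 n = {c. set c \<subseteq> {1, 2} \<and> sum_list c = n}"

text \<open>Water cells: sum over positions i of max 0 (min (max of prefix up to i) (max of suffix from i) - c_i).
  Uses 0-based indexing; nat subtraction realises the max with 0.\<close>

definition water :: "nat list \<Rightarrow> nat" where
  "water c = (\<Sum>i<length c.
      min (Max (set (take (Suc i) c))) (Max (set (drop i c))) - c ! i)"

definition W :: "nat \<Rightarrow> nat \<Rightarrow> nat list set" where
  "W n k = {c \<in> C12 n. water c = k}"

definition w :: "nat \<Rightarrow> nat \<Rightarrow> nat" where
  "w n k = card (W n k)"

end

theory Submission
  imports Defs
begin

text \<open>For parts in {1,2}, the water cells are exactly the 1s lying strictly between two 2s.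
  Inserting a part right after the first 2 is injective; inserting a 1 there traps one more cell
  (provided some cell is already trapped, so that a later 2 exists), inserting a 2 changes nothing.
  Conversely, when at least one cell is trapped, deleting the part after the first 2 inverts
  the insertion. Hence \<open>W n k\<close> is the disjoint union of the images of \<open>W (n-1) (k-1)\<close> and
  \<open>W (n-2) k\<close>.\<close>

fun ones_before_two :: "nat list \<Rightarrow> nat" where
  "ones_before_two [] = 0"
| "ones_before_two (x # r) = (if x = 1 \<and> 2 \<in> set r then 1 else 0) + ones_before_two r"

fun trapped_ones :: "nat list \<Rightarrow> nat" where
  "trapped_ones [] = 0"
| "trapped_ones (x # r) = (if x = 2 then ones_before_two r else trapped_ones r)"

text \<open>Generalises \<open>trapped_ones\<close> for the induction: \<open>p\<close> records whether a 2 has already been seen.\<close>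

definition ones_between_twos :: "bool \<Rightarrow> nat list \<Rightarrow> nat" where
  "ones_between_twos p c = (\<Sum>i<length c.
     if c ! i = 1 \<and> (p \<or> 2 \<in> set (take i c)) \<and> 2 \<in> set (drop (Suc i) c) then 1 else 0)"

lemma ones_between_twos_Nil: "ones_between_twos p [] = 0"
  by (simp add: ones_between_twos_def)

lemma ones_between_twos_Cons:
  "ones_between_twos p (x # r) =
     (if x = 1 \<and> p \<and> 2 \<in> set r then 1 else 0) + ones_between_twos (p \<or> x = 2) r"
  unfolding ones_between_twos_def by (simp add: sum.lessThan_Suc_shift del: sum.lessThan_Suc)

lemma ones_between_twos_True: "ones_between_twos True r = ones_before_two r"
  by (induction r) (auto simp: ones_between_twos_Nil ones_between_twos_Cons)

lemma ones_between_twos_False: "ones_between_twos False r = trapped_ones r"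
  by (induction r) (auto simp: ones_between_twos_Nil ones_between_twos_Cons ones_between_twos_True)

lemma Max_set_one_two:
  assumes "set xs \<subseteq> {1, 2}" and "xs \<noteq> []"
  shows "Max (set xs) = (if (2::nat) \<in> set xs then 2 else 1)"
proof (cases "2 \<in> set xs")
  case True
  then show ?thesis using assms(1) by (intro Max_eqI) auto
next
  case False
  then have "set xs = {1}" using assms by (cases xs) auto
  then show ?thesis using False by simp
qed

lemma water_eq_trapped_ones:
  assumes "set c \<subseteq> {1, 2}"
  shows "water c = trapped_ones c"
  unfolding water_def ones_between_twos_False[symmetric] ones_between_twos_def
proof (rule sum.cong[OF refl])
  fix i assume "i \<in> {..<length c}"
  then have i: "i < length c" by simp
  have take: "take (Suc i) c = take i c @ [c ! i]" using i by (simp add: take_Suc_conv_app_nth)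
  have drop: "drop i c = c ! i # drop (Suc i) c" using i by (simp add: Cons_nth_drop_Suc)
  have "c ! i \<in> {1, 2}" using i assms nth_mem by blast
  moreover have "set (take (Suc i) c) \<subseteq> {1, 2}" "set (drop i c) \<subseteq> {1, 2}"
    using assms set_take_subset set_drop_subset by fastforce+
  ultimately show "min (Max (set (take (Suc i) c))) (Max (set (drop i c))) - c ! i =
      (if c ! i = 1 \<and> (False \<or> 2 \<in> set (take i c)) \<and> 2 \<in> set (drop (Suc i) c) then 1 else 0)"
    using Max_set_one_two[of "take (Suc i) c"] Max_set_one_two[of "drop i c"]
    unfolding take drop by auto
qed

lemma ones_before_two_no_two: "2 \<notin> set r \<Longrightarrow> ones_before_two r = 0"
  by (induction r) auto

lemma two_mem_if_trapped_ones_pos: "trapped_ones c \<noteq> 0 \<Longrightarrow> 2 \<in> set c"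
  by (induction c) (auto simp: ones_before_two_no_two split: if_splits)

fun ins_after_two :: "nat \<Rightarrow> nat list \<Rightarrow> nat list" where
  "ins_after_two x [] = []"
| "ins_after_two x (y # r) = (if y = 2 then 2 # x # r else y # ins_after_two x r)"

lemma inj_ins_after_two: "inj (ins_after_two x)"
proof (rule injI)
  show "ins_after_two x c = ins_after_two x d \<Longrightarrow> c = d" for c d
  proof (induction c arbitrary: d)
    case Nil
    then show ?case by (cases d) (auto split: if_splits)
  next
    case (Cons y r)
    then show ?case by (cases d) (auto split: if_splits)
  qed
qed

lemma ins_after_two_one_neq_two:
  "2 \<in> set c \<Longrightarrow> ins_after_two 1 c \<noteq> ins_after_two 2 d"
proof (induction c arbitrary: d)
  case (Cons y r)
  then show ?case by (cases d) (auto split: if_splits)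
qed simp

lemma set_ins_after_two: "set (ins_after_two x c) \<subseteq> insert x (set c)"
  by (induction c) auto

lemma sum_list_ins_after_two:
  "2 \<in> set c \<Longrightarrow> sum_list (ins_after_two x c) = sum_list c + x"
  by (induction c) auto

lemma trapped_ones_ins_after_two_two: "trapped_ones (ins_after_two 2 c) = trapped_ones c"
  by (induction c) auto

lemma trapped_ones_ins_after_two_one:
  "trapped_ones c \<noteq> 0 \<Longrightarrow> trapped_ones (ins_after_two 1 c) = Suc (trapped_ones c)"
  by (induction c) (auto simp: ones_before_two_no_two dest: two_mem_if_trapped_ones_pos)

lemma trapped_ones_ins_after_two_one_le:
  "trapped_ones (ins_after_two 1 c) \<le> Suc (trapped_ones c)"
  by (induction c) auto

lemma obtain_ins_after_two_preimage:
  assumes "trapped_ones c \<noteq> 0" and "set c \<subseteq> {1, 2}"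
  obtains x d where "x \<in> {1, 2}" "set d \<subseteq> {1, 2}" "2 \<in> set d" "c = ins_after_two x d"
  using assms
proof (induction c arbitrary: thesis)
  case Nil
  then show ?case by simp
next
  case (Cons y r)
  show ?case
  proof (cases "y = 2")
    case True
    then obtain z r' where "r = z # r'" using Cons.prems(2) by (cases r) auto
    then show ?thesis using True Cons.prems by (intro Cons.prems(1)[of z "2 # r'"]) auto
  next
    case False
    then have "trapped_ones r \<noteq> 0" "set r \<subseteq> {1, 2}" using Cons.prems(2,3) by auto
    then obtain x d where "x \<in> {1, 2}" "set d \<subseteq> {1, 2}" "2 \<in> set d" "r = ins_after_two x d"
      using Cons.IH by blast
    then show ?thesis using False Cons.prems by (intro Cons.prems(1)[of x "y # d"]) auto
  qed
qed

lemma W_eq: "W n k = {c. set c \<subseteq> {1, 2} \<and> sum_list c = n \<and> trapped_ones c = k}"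
  unfolding W_def C12_def using water_eq_trapped_ones by auto

lemma finite_W: "finite (W n k)"
proof (rule finite_subset)
  have "length c \<le> sum_list c" if "set c \<subseteq> {1, 2}" for c :: "nat list"
    using that by (induction c) auto
  then show "W n k \<subseteq> {c. set c \<subseteq> {1, 2} \<and> length c \<le> n}"
    unfolding W_eq by auto
  show "finite {c. set c \<subseteq> ({1, 2}::nat set) \<and> length c \<le> n}"
    by (rule finite_lists_length_le) simp
qed

lemma ins_after_two_mem_W:
  assumes "d \<in> W m j" and "j \<noteq> 0" and "x \<in> {1, 2}"
  shows "ins_after_two x d \<in> W (m + x) (if x = 1 then Suc j else j)"
proof -
  have d: "set d \<subseteq> {1, 2}" "sum_list d = m" "trapped_ones d = j"
    using assms(1) unfolding W_eq by auto
  have "2 \<in> set d" using d(3) assms(2) two_mem_if_trapped_ones_pos by simp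
  then show ?thesis
    using d assms(2,3) set_ins_after_two[of x d] sum_list_ins_after_two
      trapped_ones_ins_after_two_one trapped_ones_ins_after_two_two
    unfolding W_eq by auto
qed

lemma W_eq_images:
  assumes "k \<ge> 2"
  shows "W n k = ins_after_two 1 ` W (n - 1) (k - 1) \<union> ins_after_two 2 ` W (n - 2) k"
    (is "_ = ?A \<union> ?B")
proof
  show "W n k \<subseteq> ?A \<union> ?B"
  proof
    fix c assume "c \<in> W n k"
    then have c: "set c \<subseteq> {1, 2}" "sum_list c = n" "trapped_ones c = k"
      unfolding W_eq by auto
    obtain x d where d: "x \<in> {1, 2}" "set d \<subseteq> {1, 2}" "2 \<in> set d"
      and c_eq: "c = ins_after_two x d"
      using obtain_ins_after_two_preimage[of c] c(1,3) assms by auto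
    have "sum_list d = n - x" using c(2) c_eq sum_list_ins_after_two[OF d(3)] by simp
    moreover have "trapped_ones d = (if x = 1 then k - 1 else k)"
    proof (cases "x = 1")
      case True
      then have "trapped_ones d \<noteq> 0"
        using c(3) c_eq assms trapped_ones_ins_after_two_one_le[of d] by auto
      then show ?thesis using True c(3) c_eq trapped_ones_ins_after_two_one by simp
    next
      case False
      then show ?thesis using c(3) c_eq d(1) trapped_ones_ins_after_two_two by auto
    qed
    ultimately show "c \<in> ?A \<union> ?B" using c_eq d unfolding W_eq by auto
  qed
next
  have sum_ge: "2 \<le> m" if "d \<in> W m j" "j \<noteq> 0" for d m j
    using that two_mem_if_trapped_ones_pos member_le_sum_list unfolding W_eq by fastforce
  show "?A \<union> ?B \<subseteq> W n k"
  proof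
    fix c assume "c \<in> ?A \<union> ?B"
    then consider d where "d \<in> W (n - 1) (k - 1)" "c = ins_after_two 1 d"
      | d where "d \<in> W (n - 2) k" "c = ins_after_two 2 d" by blast
    then show "c \<in> W n k"
    proof cases
      case 1
      then show ?thesis
        using ins_after_two_mem_W[of d "n - 1" "k - 1" 1] sum_ge[of d "n - 1" "k - 1"] assms
        by (simp add: Suc_diff_le)
    next
      case 2
      then have "n - 2 + 2 = n" using sum_ge[of d "n - 2" k] assms by simp
      then show ?thesis using ins_after_two_mem_W[of d "n - 2" k 2] 2 assms by simp
    qed
  qed
qed

theorem theorem2p4:
  fixes n k :: nat
  assumes "k \<ge> 2" and "n \<ge> 6"
  shows "w n k = w (n - 1) (k - 1) + w (n - 2) k"
proof -
  have "2 \<in> set c" if "c \<in> W (n - 1) (k - 1)" for c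
    using that two_mem_if_trapped_ones_pos assms(1) unfolding W_eq by simp
  then have disjoint: "ins_after_two 1 ` W (n - 1) (k - 1) \<inter> ins_after_two 2 ` W (n - 2) k = {}"
    using ins_after_two_one_neq_two by fast
  have "w n k = card (ins_after_two 1 ` W (n - 1) (k - 1)) + card (ins_after_two 2 ` W (n - 2) k)"
    unfolding w_def W_eq_images[OF assms(1), of n]
    by (rule card_Un_disjoint[OF _ _ disjoint]) (simp_all add: finite_W)
  also have "\<dots> = w (n - 1) (k - 1) + w (n - 2) k"
    unfolding w_def by (simp add: card_image[OF inj_on_subset[OF inj_ins_after_two subset_UNIV]])
  finally show ?thesis .
qed

end
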